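(* Let $p$ be a prime, $q=p^r$, $n\ge1$, and let $l$ be an integer with $1\le l\le 2r-1$. Let $\mathscr{C}\subseteq\mathrm{GF}(q^2)^n$ be a scalable code and $\mathscr{B}$ a basis of $\mathrm{GF}(q^2)$ over $\mathrm{GF}(q)$. If there is a power of two which divides $r$ but does not divide $l$, then $\mathrm{Im}_{\mathscr{B}}(\mathscr{C})$ is self-orthogonal w.r.t. $\tilde h_l(x,y)=\sum_{i=1}^{2n}x_iy_i^{p^l}$ on $\mathrm{GF}(q)^{2n}$ if and only if $\mathrm{Tr}(\mathscr{C})$ is self-orthogonal w.r.t. $h_l(x,y)=\sum_{i=1}^n x_iy_i^{p^l}$ on $\mathrm{GF}(q)^n$.
   Context: $\mathrm{Tr}:\mathrm{GF}(q^2)\to\mathrm{GF}(q)$, $\mathrm{Tr}(a)=a+a^q$. The dual basis of a basis $\{\gamma_1,\gamma_2\}$ is the unique basis $\{\beta_1,\beta_2\}$ with $\mathrm{Tr}(\gamma_i\beta_j)=\delta_{ij}$. A code $\mathscr{C}\subseteq\mathrm{GF}(q^2)^n$ is scalable if $x\in\mathscr{C}\Rightarrow\alpha x\in\mathscr{C}$ for all $\alpha\in\mathrm{GF}(q^2)$. For a basis $\mathscr{B}$ with dual basis $\{\beta_1,\beta_2\}$, $\mathrm{Im}_{\mathscr{B}}(\mathscr{C})=\{(\mathrm{Tr}(\beta_1x_1),\ldots,\mathrm{Tr}(\beta_1x_n),\mathrm{Tr}(\beta_2x_1),\ldots,\mathrm{Tr}(\beta_2x_n)):x\in\mathscr{C}\}$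 and $\mathrm{Tr}(\mathscr{C})=\{(\mathrm{Tr}(x_1),\ldots,\mathrm{Tr}(x_n)):x\in\mathscr{C}\}$. A code $D$ is self-orthogonal w.r.t. a form $g$ if $g(x,y)=0$ for all $x,y\in D$. *)

theory Defs
  imports Main "HOL-Computational_Algebra.Primes"
begin

text \<open>The ambient field 'a plays the role of GF(q^2); GF(q) is its subfield
  of elements fixed by x \<mapsto> x^q. Vectors of length n are lists.\<close>

definition subF :: "nat \<Rightarrow> 'a::field set" where
  "subF q = {x. x ^ q = x}"

definition tr :: "nat \<Rightarrow> 'a::field \<Rightarrow> 'a" where
  "tr q a = a + a ^ q"

definition is_basis :: "nat \<Rightarrow> 'a::field \<Rightarrow> 'a \<Rightarrow> bool" where
  "is_basis q g1 g2 \<longleftrightarrow>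
     (\<forall>a\<in>subF q. \<forall>b\<in>subF q. a * g1 + b * g2 = 0 \<longrightarrow> a = 0 \<and> b = 0) \<and>
     (\<forall>x. \<exists>a\<in>subF q. \<exists>b\<in>subF q. x = a * g1 + b * g2)"

definition is_dual_basis :: "nat \<Rightarrow> 'a::field \<Rightarrow> 'a \<Rightarrow> 'a \<Rightarrow> 'a \<Rightarrow> bool" where
  "is_dual_basis q g1 g2 b1 b2 \<longleftrightarrow> is_basis q b1 b2 \<and>
     tr q (g1 * b1) = 1 \<and> tr q (g1 * b2) = 0 \<and> tr q (g2 * b1) = 0 \<and> tr q (g2 * b2) = 1"

definition scalable :: "'a::field list set \<Rightarrow> bool" where
  "scalable C \<longleftrightarrow> (\<forall>x\<in>C. \<forall>\<alpha>. map (\<lambda>c. \<alpha> * c) x \<in> C)"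

definition Im_B :: "nat \<Rightarrow> 'a::field \<Rightarrow> 'a \<Rightarrow> 'a list set \<Rightarrow> 'a list set" where
  "Im_B q b1 b2 C = (\<lambda>x. map (\<lambda>c. tr q (b1 * c)) x @ map (\<lambda>c. tr q (b2 * c)) x) ` C"

definition Tr_code :: "nat \<Rightarrow> 'a::field list set \<Rightarrow> 'a list set" where
  "Tr_code q C = map (tr q) ` C"

definition hform :: "nat \<Rightarrow> nat \<Rightarrow> nat \<Rightarrow> 'a::field list \<Rightarrow> 'a list \<Rightarrow> 'a" where
  "hform p l m x y = (\<Sum>i<m. x ! i * (y ! i) ^ (p ^ l))"

definition self_orth :: "('a list \<Rightarrow> 'a list \<Rightarrow> 'a::field) \<Rightarrow> 'a list set \<Rightarrow> bool" where
  "self_orth g D \<longleftrightarrow> (\<forall>x\<in>D. \<forall>y\<in>D. g x y = 0)"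

end

theory Submission
  imports Defs "HOL-Number_Theory.Residues"
begin

text \<open>Write \<open>Q = p^r\<close> and \<open>s = p^l\<close>. Because traces lie in \<open>GF(q)\<close>,
  \<open>Tr(a x) Tr(b y)^s = Tr(a b^s x y^s + a b^(Qs) x y^(Qs))\<close>, so both forms are expressed through
  \<open>A = \<Sum> x\<^sub>i y\<^sub>i^s\<close> and \<open>D = \<Sum> x\<^sub>i y\<^sub>i^(Qs)\<close>: \<open>h\<^sub>l(Tr x, Tr y) = Tr(A + D)\<close> and
  \<open>h\<^sub>l(Im \<alpha>x, Im \<beta>y) = Tr(\<alpha>(\<beta>^s u A + \<beta>^(Qs) v D))\<close> with \<open>u = \<beta>\<^sub>1^(1+s) + \<beta>\<^sub>2^(1+s)\<close>,
  \<open>v = \<beta>\<^sub>1^(1+Qs) + \<beta>\<^sub>2^(1+Qs)\<close>. Since \<open>Im x\<close> consists of the traces of the scalar multiples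
  \<open>\<beta>\<^sub>1x, \<beta>\<^sub>2x\<close>, self-orthogonality of \<open>Tr(C)\<close> passes to \<open>Im(C)\<close>. Conversely,
  nondegeneracy of the trace form and the choices \<open>\<beta> = 1\<close> and \<open>\<beta> \<notin> GF(q)\<close> force
  \<open>uA = vD = 0\<close>. Finally \<open>u, v \<noteq> 0\<close>: otherwise \<open>\<beta>\<^sub>1/\<beta>\<^sub>2\<close> would lie in \<open>GF(q)\<close>, which is where the
  2-adic hypothesis enters.\<close>

lemma field_power_card_eq_self:
  fixes x :: "'a::{field,finite}"
  shows "x ^ card (UNIV :: 'a set) = x"
proof (cases "x = 0")
  case False
  define G :: "'a monoid" where "G = \<lparr>carrier = UNIV - {0}, mult = (*), one = 1\<rparr>"
  have "comm_group G"
    by (rule comm_groupI) (auto simp: G_def ac_simps intro!: bexI[of _ "inverse x" for x])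
  moreover have "y [^]\<^bsub>G\<^esub> k = y ^ k" for y :: 'a and k :: nat
    by (induction k) (simp_all add: G_def mult.commute)
  ultimately have "x ^ card (UNIV - {0::'a}) = 1"
    using comm_group.power_order_eq_one[of G x] False by (simp add: G_def)
  then show ?thesis
    by (simp add: card_Diff_singleton)
      (metis Suc_pred finite_UNIV_card_ge_0 finite power_Suc2 mult_1_left)
qed (simp add: finite_UNIV_card_ge_0)

lemma CHAR_eq_if_card_eq_prime_power:
  assumes "prime p" and "card (UNIV :: 'a::{field,finite} set) = p ^ k"
  shows "CHAR('a) = p"
proof -
  have "prime CHAR('a)"
    using prime_CHAR_semidom finite_imp_CHAR_pos[OF finite_UNIV] by blast
  moreover have "CHAR('a) dvd p ^ k"
    using CHAR_dvd_CARD[where 'a = 'a] assms(2) by simp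
  ultimately show ?thesis
    using assms(1) prime_dvd_power primes_dvd_imp_eq by blast
qed

lemma power_fixed_power_exp:
  fixes t :: "'a::monoid_mult"
  assumes "t ^ c = t"
  shows "t ^ (c ^ j) = t"
  by (induction j) (simp_all add: power_mult assms)

lemma power_fixed_gcd_exp:
  fixes t :: "'a::monoid_mult" and c :: nat
  assumes "t ^ (c ^ a) = t" and "t ^ (c ^ b) = t" and "a \<noteq> 0"
  shows "t ^ (c ^ gcd a b) = t"
proof -
  obtain x y where bezout: "a * x = b * y + gcd a b"
    using bezout_nat[OF assms(3)] by blast
  have "t = t ^ (c ^ (a * x))"
    using power_fixed_power_exp[OF assms(1)] by (simp add: power_mult)
  also have "\<dots> = (t ^ (c ^ (b * y))) ^ (c ^ gcd a b)"
    by (simp add: bezout power_add power_mult)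
  also have "t ^ (c ^ (b * y)) = t"
    using power_fixed_power_exp[OF assms(2)] by (simp add: power_mult)
  finally show ?thesis ..
qed

lemma double_gcd_dvd_if_two_power_dvd:
  fixes m r :: nat
  assumes "2 ^ k dvd r" and "\<not> 2 ^ k dvd m"
  shows "2 * gcd m r dvd r"
proof -
  define d where "d = gcd m r"
  obtain e where r: "r = d * e"
    unfolding d_def by (metis gcd_dvd2 dvdE)
  have "even e"
  proof (rule ccontr)
    assume "odd e"
    then have "coprime (2 ^ k) e"
      by simp
    then have "2 ^ k dvd d"
      using assms(1) r coprime_dvd_mult_left_iff by blast
    then show False
      using assms(2) dvd_trans gcd_dvd1 unfolding d_def by blast
  qed
  then have "2 * d dvd r"
    by (auto simp: r)
  then show ?thesis
    unfolding d_def .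
qed

lemma zero_if_sum_and_combination_zero:
  fixes X Y c d :: "'a::field"
  assumes "X + Y = 0" and "c * X + d * Y = 0" and "c \<noteq> d"
  shows "X = 0" and "Y = 0"
proof -
  have "(c - d) * X = (c * X + d * Y) - d * (X + Y)"
    by (simp add: algebra_simps)
  then have "(c - d) * X = 0"
    using assms(1,2) by simp
  then show "X = 0"
    using assms(3) by simp
  then show "Y = 0"
    using assms(1) by simp
qed

lemma subF_power_closed: "c \<in> subF q \<Longrightarrow> c ^ k \<in> subF q"
proof -
  have "(c ^ k) ^ q = (c ^ q) ^ k"
    by (simp only: mult.commute flip: power_mult)
  then show "c \<in> subF q \<Longrightarrow> c ^ k \<in> subF q"
    by (simp add: subF_def)
qed

lemma subF_ne_UNIV_if_is_basis:
  fixes b1 b2 :: "'a::field"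
  assumes "is_basis q b1 b2"
  shows "subF q \<noteq> (UNIV :: 'a set)"
proof (rule notI)
  assume all: "subF q = (UNIV :: 'a set)"
  have "b2 = 0 \<and> - b1 = 0"
    using assms[unfolded is_basis_def, THEN conjunct1, rule_format, of b2 "- b1"]
    by (simp add: all)
  then have "(1::'a) = 0"
    using assms unfolding is_basis_def by force
  then show False
    by simp
qed

lemma is_basis_second_nonzero:
  assumes "is_basis q b1 b2" and "q \<noteq> 0"
  shows "b2 \<noteq> 0"
proof
  assume "b2 = 0"
  then have "0 * b1 + 1 * b2 = 0"
    by simp
  moreover have "0 \<in> subF q" and "1 \<in> subF q"
    using assms(2) by (simp_all add: subF_def)
  ultimately show False
    using assms(1)[unfolded is_basis_def, THEN conjunct1] by fastforce
qed

lemma tr_mult_subF: "c \<in> subF q \<Longrightarrow> tr q a * c = tr q (a * c)"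
  by (simp add: tr_def subF_def power_mult_distrib distrib_right)

lemma tr_nondegenerate:
  fixes c w :: "'a::field"
  assumes "tr q c \<noteq> 0" and "\<forall>\<alpha>. tr q (\<alpha> * w) = 0"
  shows "w = 0"
proof (rule ccontr)
  assume "w \<noteq> 0"
  then have "c / w * w = c"
    by simp
  then show False
    using assms spec[OF assms(2), of "c / w"] by simp
qed

definition tr_vec :: "nat \<Rightarrow> 'a::field \<Rightarrow> 'a list \<Rightarrow> 'a list" where
  "tr_vec q b x = map (\<lambda>c. tr q (b * c)) x"

lemma Im_B_eq_image_tr_vec: "Im_B q b1 b2 C = (\<lambda>x. tr_vec q b1 x @ tr_vec q b2 x) ` C"
  by (simp add: Im_B_def tr_vec_def)

lemma Tr_code_eq_image_tr_vec: "Tr_code q C = tr_vec q 1 ` C"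
  by (simp add: Tr_code_def tr_vec_def)

lemma tr_vec_scale: "tr_vec q b (map (\<lambda>c. \<alpha> * c) x) = tr_vec q (b * \<alpha>) x"
  by (simp add: tr_vec_def mult.assoc)

lemma length_tr_vec [simp]: "length (tr_vec q b x) = length x"
  by (simp add: tr_vec_def)

lemma sum_lessThan_add:
  fixes f :: "nat \<Rightarrow> 'a::comm_monoid_add"
  shows "(\<Sum>i<m + k. f i) = (\<Sum>i<m. f i) + (\<Sum>i<k. f (m + i))"
  by (induction k) (simp_all add: add.assoc)

lemma hform_append:
  assumes "length x1 = n" and "length y1 = n"
  shows "hform p l (2 * n) (x1 @ x2) (y1 @ y2) = hform p l n x1 y1 + hform p l n x2 y2"
  using assms by (simp add: hform_def mult_2 sum_lessThan_add nth_append)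

lemma self_orth_Im_B_if_self_orth_Tr_code:
  assumes "\<forall>x\<in>C. length x = n" and "scalable C"
    and "self_orth (hform p l n) (Tr_code q C)"
  shows "self_orth (hform p l (2 * n)) (Im_B q b1 b2 C)"
  unfolding self_orth_def Im_B_eq_image_tr_vec
proof (intro ballI, elim imageE)
  fix x y X Y
  assume x: "x \<in> C" and y: "y \<in> C"
    and X: "X = tr_vec q b1 x @ tr_vec q b2 x" and Y: "Y = tr_vec q b1 y @ tr_vec q b2 y"
  have vanish: "hform p l n (tr_vec q b x) (tr_vec q b y) = 0" for b
  proof -
    have "tr_vec q b z \<in> Tr_code q C" if "z \<in> C" for z
      using tr_vec_scale[of q 1 b z] assms(2) that
      unfolding Tr_code_eq_image_tr_vec scalable_def by (metis image_eqI mult_1)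
    then show ?thesis
      using assms(3) x y unfolding self_orth_def by blast
  qed
  show "hform p l (2 * n) X Y = 0"
    using assms(1) x y by (simp add: X Y hform_append vanish)
qed

context
  fixes p :: nat
  assumes prime_p: "prime p" and CHAR_p: "CHAR('a::field) = p"
begin

lemma frobenius_add: "(x + y) ^ p ^ m = x ^ p ^ m + y ^ p ^ m" for x y :: 'a
  using freshmans_dream' prime_p CHAR_p by blast

lemma frobenius_sum: "sum f A ^ p ^ m = (\<Sum>i\<in>A. f i ^ p ^ m)" for f :: "'b \<Rightarrow> 'a"
  using freshmans_dream_sum' prime_p CHAR_p by blast

lemma frobenius_uminus: "(- x) ^ p ^ m = - (x ^ p ^ m)" for x :: 'a
proof -
  have "x ^ p ^ m + (- x) ^ p ^ m = 0"
    using frobenius_add[of x "- x" m] prime_gt_0_nat[OF prime_p] by (simp add: power_0_left)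
  then show ?thesis
    by (metis minus_unique)
qed

lemma frobenius_inject: "x ^ p ^ m = y ^ p ^ m \<longleftrightarrow> x = y" for x y :: 'a
proof
  assume "x ^ p ^ m = y ^ p ^ m"
  then have "(x - y) ^ p ^ m = 0"
    using frobenius_add[of "x - y" y m] by simp
  then show "x = y"
    by simp
qed simp

lemma tr_add: "tr (p ^ r) (a + b) = tr (p ^ r) a + tr (p ^ r) b" for a b :: 'a
  by (simp add: tr_def frobenius_add)

lemma tr_sum: "tr (p ^ r) (sum f A) = (\<Sum>i\<in>A. tr (p ^ r) (f i))" for f :: "'b \<Rightarrow> 'a"
  by (simp add: tr_def frobenius_sum sum.distrib)

lemma tr_power_prime_power: "tr (p ^ r) a ^ p ^ l = a ^ p ^ l + a ^ p ^ (r + l)" for a :: 'a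
proof -
  have "(a ^ p ^ r) ^ p ^ l = a ^ p ^ (r + l)"
    by (simp only: power_add power_mult)
  then show ?thesis
    by (simp add: tr_def frobenius_add)
qed

lemma frobenius_double_fixed_if_power_Suc_eq_minus_one:
  fixes t :: 'a
  assumes "t ^ (p ^ m + 1) = -1"
  shows "t ^ p ^ (2 * m) = t"
proof -
  have norm: "t * t ^ p ^ m = -1"
    using assms by simp
  then have "t \<noteq> 0"
    by auto
  have "t ^ p ^ m * t ^ p ^ (2 * m) = (t * t ^ p ^ m) ^ p ^ m"
    by (simp add: mult_2 power_add power_mult power_mult_distrib)
  also have "\<dots> = t ^ p ^ m * t"
    by (simp add: norm frobenius_uminus mult.commute)
  finally show ?thesis
    using \<open>t \<noteq> 0\<close> by simp
qed

text \<open>\<open>t\<close> is fixed by the \<open>p^(2m)\<close>-th and \<open>p^(2r)\<close>-th powers, hence by the \<open>p^gcd(2m,2r)\<close>-th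
  power, and \<open>gcd(2m,2r) = 2 gcd(m,r)\<close> divides \<open>r\<close> by the 2-adic condition.\<close>
lemma frobenius_fixed_if_power_Suc_eq_minus_one:
  fixes t :: 'a
  assumes "t ^ p ^ (2 * r) = t" and "t ^ (p ^ m + 1) = -1"
    and "2 ^ k dvd r" and "\<not> 2 ^ k dvd m"
  shows "t ^ p ^ r = t"
proof -
  have "m \<noteq> 0"
    using assms(4) by (metis dvd_0_right)
  then have "t ^ p ^ gcd (2 * m) (2 * r) = t"
    using power_fixed_gcd_exp[OF frobenius_double_fixed_if_power_Suc_eq_minus_one[OF assms(2)]
        assms(1)] by simp
  then have fixed: "t ^ p ^ (2 * gcd m r) = t"
    by (simp add: gcd_mult_distrib_nat)
  obtain j where "r = 2 * gcd m r * j"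
    using double_gcd_dvd_if_two_power_dvd[OF assms(3,4)] by blast
  then have "p ^ r = (p ^ (2 * gcd m r)) ^ j"
    by (metis power_mult)
  then show ?thesis
    using power_fixed_power_exp[OF fixed, of j] by (simp only:)
qed

context
  fixes r :: nat
  assumes frobenius_square: "\<forall>x::'a. x ^ p ^ (2 * r) = x"
begin

lemma tr_in_subF: "tr (p ^ r) a \<in> subF (p ^ r)" for a :: 'a
proof -
  have "(a ^ p ^ r) ^ p ^ r = a"
    using frobenius_square by (simp add: mult_2 power_add power_mult)
  then show ?thesis
    by (simp add: subF_def tr_def frobenius_add add.commute)
qed

lemma is_basis_power_Suc_add_nonzero:
  fixes b1 b2 :: 'a
  assumes "is_basis (p ^ r) b1 b2" and "2 ^ k dvd r" and "\<not> 2 ^ k dvd m"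
  shows "b1 ^ (p ^ m + 1) + b2 ^ (p ^ m + 1) \<noteq> 0"
proof
  assume sum_zero: "b1 ^ (p ^ m + 1) + b2 ^ (p ^ m + 1) = 0"
  have "b2 \<noteq> 0"
    using is_basis_second_nonzero[OF assms(1)] prime_gt_0_nat[OF prime_p] by simp
  define t where "t = b1 / b2"
  have "t ^ (p ^ m + 1) = -1"
    using sum_zero \<open>b2 \<noteq> 0\<close> by (simp add: t_def power_divide eq_neg_iff_add_eq_0 field_simps)
  then have "t ^ p ^ r = t"
    using frobenius_fixed_if_power_Suc_eq_minus_one frobenius_square assms(2,3) by blast
  then have "- t \<in> subF (p ^ r)" and "1 \<in> subF (p ^ r)"
    by (simp_all add: subF_def frobenius_uminus)
  moreover have "1 * b1 + (- t) * b2 = 0"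
    using \<open>b2 \<noteq> 0\<close> by (simp add: t_def)
  ultimately show False
    using assms(1)[unfolded is_basis_def, THEN conjunct1] by fastforce
qed

lemma hform_tr_vec:
  fixes x y :: "'a list" and a b :: 'a
  assumes "length x = n" and "length y = n"
  shows "hform p l n (tr_vec (p ^ r) a x) (tr_vec (p ^ r) b y) =
    tr (p ^ r) (a * b ^ p ^ l * hform p l n x y + a * b ^ p ^ (r + l) * hform p (r + l) n x y)"
proof -
  let ?Q = "p ^ r"
  have "hform p l n (tr_vec ?Q a x) (tr_vec ?Q b y) =
      (\<Sum>i<n. tr ?Q (a * x ! i) * tr ?Q (b * y ! i) ^ p ^ l)"
    using assms by (simp add: hform_def tr_vec_def)
  also have "\<dots> = (\<Sum>i<n. tr ?Q (a * x ! i * tr ?Q (b * y ! i) ^ p ^ l))"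
    by (intro sum.cong refl tr_mult_subF subF_power_closed tr_in_subF)
  also have "\<dots> = (\<Sum>i<n. tr ?Q (a * b ^ p ^ l * (x ! i * y ! i ^ p ^ l)
      + a * b ^ p ^ (r + l) * (x ! i * y ! i ^ p ^ (r + l))))"
    by (simp add: tr_power_prime_power power_mult_distrib algebra_simps)
  also have "\<dots> = tr ?Q (a * b ^ p ^ l * hform p l n x y
      + a * b ^ p ^ (r + l) * hform p (r + l) n x y)"
    by (simp add: hform_def sum_distrib_left sum.distrib flip: tr_sum)
  finally show ?thesis .
qed

lemma hform_tr_vec_append:
  fixes x y :: "'a list" and b1 b2 \<alpha> \<beta> :: 'a
  assumes "length x = n" and "length y = n"
  shows "hform p l (2 * n)
      (tr_vec (p ^ r) (b1 * \<alpha>) x @ tr_vec (p ^ r) (b2 * \<alpha>) x)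
      (tr_vec (p ^ r) (b1 * \<beta>) y @ tr_vec (p ^ r) (b2 * \<beta>) y) =
    tr (p ^ r) (\<alpha> * (\<beta> ^ p ^ l * ((b1 ^ (p ^ l + 1) + b2 ^ (p ^ l + 1)) * hform p l n x y)
      + \<beta> ^ p ^ (r + l) * ((b1 ^ (p ^ (r + l) + 1) + b2 ^ (p ^ (r + l) + 1)) * hform p (r + l) n x y)))"
  (is "_ = tr ?Q _")
proof -
  let ?A = "hform p l n x y" and ?D = "hform p (r + l) n x y"
  have "hform p l (2 * n) (tr_vec ?Q (b1 * \<alpha>) x @ tr_vec ?Q (b2 * \<alpha>) x)
      (tr_vec ?Q (b1 * \<beta>) y @ tr_vec ?Q (b2 * \<beta>) y) =
    tr ?Q (b1 * \<alpha> * (b1 * \<beta>) ^ p ^ l * ?A + b1 * \<alpha> * (b1 * \<beta>) ^ p ^ (r + l) * ?D) +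
    tr ?Q (b2 * \<alpha> * (b2 * \<beta>) ^ p ^ l * ?A + b2 * \<alpha> * (b2 * \<beta>) ^ p ^ (r + l) * ?D)"
    using assms by (simp add: hform_append hform_tr_vec)
  also have "\<dots> = tr ?Q (\<alpha> * (\<beta> ^ p ^ l * ((b1 ^ (p ^ l + 1) + b2 ^ (p ^ l + 1)) * ?A)
      + \<beta> ^ p ^ (r + l) * ((b1 ^ (p ^ (r + l) + 1) + b2 ^ (p ^ (r + l) + 1)) * ?D)))"
    by (simp add: power_mult_distrib algebra_simps flip: tr_add)
  finally show ?thesis .
qed

lemma hform_components_vanish:
  fixes x y :: "'a list" and g1 g2 b1 b2 :: 'a
  assumes "is_dual_basis (p ^ r) g1 g2 b1 b2" and "2 ^ k dvd r" and "\<not> 2 ^ k dvd l"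
    and "length x = n" and "length y = n"
    and orth: "\<And>\<alpha> \<beta>. hform p l (2 * n)
      (tr_vec (p ^ r) (b1 * \<alpha>) x @ tr_vec (p ^ r) (b2 * \<alpha>) x)
      (tr_vec (p ^ r) (b1 * \<beta>) y @ tr_vec (p ^ r) (b2 * \<beta>) y) = 0"
  shows "hform p l n x y = 0" and "hform p (r + l) n x y = 0"
proof -
  let ?Q = "p ^ r"
  define A D where "A = hform p l n x y" and "D = hform p (r + l) n x y"
  define u v where "u = b1 ^ (p ^ l + 1) + b2 ^ (p ^ l + 1)"
    and "v = b1 ^ (p ^ (r + l) + 1) + b2 ^ (p ^ (r + l) + 1)"
  have basis: "is_basis ?Q b1 b2" and "tr ?Q (g1 * b1) \<noteq> 0"
    using assms(1) by (simp_all add: is_dual_basis_def)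
  have "tr ?Q (\<alpha> * (\<beta> ^ p ^ l * (u * A) + \<beta> ^ p ^ (r + l) * (v * D))) = 0" for \<alpha> \<beta>
    using orth[of \<alpha> \<beta>] hform_tr_vec_append[OF assms(4,5)] by (simp add: A_def D_def u_def v_def)
  then have comb: "\<beta> ^ p ^ l * (u * A) + \<beta> ^ p ^ (r + l) * (v * D) = 0" for \<beta>
    using tr_nondegenerate[OF \<open>tr ?Q (g1 * b1) \<noteq> 0\<close>] by blast
  obtain g :: 'a where "g \<notin> subF ?Q"
    using subF_ne_UNIV_if_is_basis[OF basis] by blast
  moreover have "g ^ p ^ (r + l) = (g ^ p ^ r) ^ p ^ l"
    by (simp only: power_add power_mult)
  ultimately have "g ^ p ^ l \<noteq> g ^ p ^ (r + l)"
    by (simp add: subF_def frobenius_inject)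
  moreover have "u * A + v * D = 0"
    using comb[of 1] by simp
  ultimately have "u * A = 0" and "v * D = 0"
    using zero_if_sum_and_combination_zero comb[of g] by blast+
  moreover have "u \<noteq> 0"
    using is_basis_power_Suc_add_nonzero[OF basis assms(2,3)] by (simp add: u_def)
  moreover have "\<not> 2 ^ k dvd r + l"
    using assms(2,3) by (simp add: dvd_add_right_iff)
  then have "v \<noteq> 0"
    using is_basis_power_Suc_add_nonzero[OF basis assms(2)] by (simp add: v_def)
  ultimately show "hform p l n x y = 0" and "hform p (r + l) n x y = 0"
    by (simp_all add: A_def D_def)
qed

lemma self_orth_Tr_code_if_self_orth_Im_B:
  fixes C :: "'a list set" and g1 g2 b1 b2 :: 'a
  assumes "\<forall>x\<in>C. length x = n" and "scalable C" and "is_dual_basis (p ^ r) g1 g2 b1 b2"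
    and "2 ^ k dvd r" and "\<not> 2 ^ k dvd l"
    and "self_orth (hform p l (2 * n)) (Im_B (p ^ r) b1 b2 C)"
  shows "self_orth (hform p l n) (Tr_code (p ^ r) C)"
  unfolding self_orth_def Tr_code_eq_image_tr_vec
proof (intro ballI, elim imageE)
  let ?Q = "p ^ r"
  fix x y X Y
  assume x: "x \<in> C" and y: "y \<in> C" and X: "X = tr_vec ?Q 1 x" and Y: "Y = tr_vec ?Q 1 y"
  have "hform p l (2 * n) (tr_vec ?Q (b1 * \<alpha>) x @ tr_vec ?Q (b2 * \<alpha>) x)
      (tr_vec ?Q (b1 * \<beta>) y @ tr_vec ?Q (b2 * \<beta>) y) = 0" for \<alpha> \<beta>
  proof -
    have "map (\<lambda>c. \<alpha> * c) x \<in> C" and "map (\<lambda>c. \<beta> * c) y \<in> C"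
      using assms(2) x y by (simp_all add: scalable_def)
    then have "hform p l (2 * n)
        (tr_vec ?Q b1 (map (\<lambda>c. \<alpha> * c) x) @ tr_vec ?Q b2 (map (\<lambda>c. \<alpha> * c) x))
        (tr_vec ?Q b1 (map (\<lambda>c. \<beta> * c) y) @ tr_vec ?Q b2 (map (\<lambda>c. \<beta> * c) y)) = 0"
      using assms(6) unfolding self_orth_def Im_B_eq_image_tr_vec by blast
    then show ?thesis
      by (simp add: tr_vec_scale)
  qed
  then have "hform p l n x y = 0" and "hform p (r + l) n x y = 0"
    using hform_components_vanish[OF assms(3-5)] assms(1) x y by blast+
  then show "hform p l n X Y = 0"
    using hform_tr_vec[where a = 1 and b = 1] assms(1) x y prime_gt_0_nat[OF prime_p]
    by (simp add: X Y tr_def power_0_left)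
qed

end

end

theorem corollary1:
  fixes C :: "('a::{field,finite}) list set"
    and p r n l :: nat and g1 g2 b1 b2 :: 'a
  assumes "prime p" and "card (UNIV :: 'a set) = p ^ (2 * r)"
    and "n \<ge> 1" and "1 \<le> l" and "l \<le> 2 * r - 1"
    and "\<forall>x\<in>C. length x = n" and "scalable C"
    and "is_basis (p ^ r) g1 g2" and "is_dual_basis (p ^ r) g1 g2 b1 b2"
    and "\<exists>k. 2 ^ k dvd r \<and> \<not> 2 ^ k dvd l"
  shows "self_orth (hform p l (2 * n)) (Im_B (p ^ r) b1 b2 C) \<longleftrightarrow>
         self_orth (hform p l n) (Tr_code (p ^ r) C)"
proof -
  have "CHAR('a) = p"
    using CHAR_eq_if_card_eq_prime_power assms(1,2) .
  moreover have "\<forall>x::'a. x ^ p ^ (2 * r) = x"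
    using field_power_card_eq_self assms(2) by metis
  moreover obtain k where "2 ^ k dvd r" and "\<not> 2 ^ k dvd l"
    using assms(10) by blast
  ultimately show ?thesis
    using self_orth_Im_B_if_self_orth_Tr_code[OF assms(6,7)]
      self_orth_Tr_code_if_self_orth_Im_B[OF assms(1) _ _ assms(6,7,9)] by blast
qed

end
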